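(* Let $|a|>2$ and let $\langle z_0\rangle$ be a bitransitive attracting cycle of $B_a(z)=z^3\frac{z-a}{1-\bar a z}$, i.e. an attracting cycle whose immediate basin contains both free critical points $c_+$ and $c_-$ in different connected components. Then the multiplier of $\langle z_0\rangle$ is a non-negative real number.
   Context: For $|a|>2$ the free critical points of $B_a$ are $c_\pm=\frac{a}{3|a|^2}\left(2+|a|^2\pm\sqrt{(|a|^2-4)(|a|^2-1)}\right)$, which are mirror images of each other under $z\mapsto1/\bar z$. *)

theory Defs
  imports "HOL-Analysis.Analysis"
begin

definition blaschke :: "complex \<Rightarrow> complex \<Rightarrow> complex" where
  "blaschke a z = z ^ 3 * (z - a) / (1 - cnj a * z)"

definition exact_period :: "(complex \<Rightarrow> complex) \<Rightarrow> complex \<Rightarrow> nat \<Rightarrow> bool" where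
  "exact_period f z0 n \<longleftrightarrow> n > 0 \<and> (f ^^ n) z0 = z0 \<and> (\<forall>m. 0 < m \<and> m < n \<longrightarrow> (f ^^ m) z0 \<noteq> z0)"

definition cycle_of :: "(complex \<Rightarrow> complex) \<Rightarrow> complex \<Rightarrow> nat \<Rightarrow> complex set" where
  "cycle_of f z0 n = {(f ^^ k) z0 | k. k < n}"

definition multiplier :: "(complex \<Rightarrow> complex) \<Rightarrow> complex \<Rightarrow> nat \<Rightarrow> complex" where
  "multiplier f z0 n = deriv (f ^^ n) z0"

definition basin :: "complex \<Rightarrow> complex \<Rightarrow> nat \<Rightarrow> complex set" where
  "basin a z0 n = {z. (\<forall>m. 1 - cnj a * ((blaschke a ^^ m) z) \<noteq> 0) \<and>
      (\<lambda>m. infdist ((blaschke a ^^ m) z) (cycle_of (blaschke a) z0 n)) \<longlonglongrightarrow> 0}"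

definition immediate_basin :: "complex \<Rightarrow> complex \<Rightarrow> nat \<Rightarrow> complex set" where
  "immediate_basin a z0 n =
     (\<Union>w\<in>cycle_of (blaschke a) z0 n. connected_component_set (basin a z0 n) w)"

definition crit_plus :: "complex \<Rightarrow> complex" where
  "crit_plus a = a / complex_of_real (3 * (cmod a)^2) *
     complex_of_real (2 + (cmod a)^2 + sqrt (((cmod a)^2 - 4) * ((cmod a)^2 - 1)))"

definition crit_minus :: "complex \<Rightarrow> complex" where
  "crit_minus a = a / complex_of_real (3 * (cmod a)^2) *
     complex_of_real (2 + (cmod a)^2 - sqrt (((cmod a)^2 - 4) * ((cmod a)^2 - 1)))"

end

theory Submission
  imports Defs
begin

text \<open>
  \<open>B\<^sub>a\<close> commutes with the reflection \<open>\<rho>(z) = 1/z\<^sup>*\<close> in the unit circle, and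
  \<open>\<rho>\<close> swaps \<open>c\<^sub>+\<close> and \<open>c\<^sub>-\<close>. The orbit of \<open>c\<^sub>-\<close> is the mirror image of the orbit
  of \<open>c\<^sub>+\<close>, so it converges both to the cycle and to its mirror image; hence the cycle is
  \<open>\<rho>\<close>-invariant, \<open>\<rho>(z\<^sub>0) = B\<^sup>k(z\<^sub>0)\<close> with \<open>k < n\<close>. If \<open>k = 0\<close>, then \<open>\<rho>\<close> fixes the cycle
  pointwise and maps the basin component of \<open>c\<^sub>+\<close> into itself, so \<open>c\<^sub>-\<close> lies in the same
  component, which is excluded. Otherwise \<open>n = 2k\<close>, and with \<open>g = B\<^sup>k\<close> the multiplier is
  \<open>g'(\<rho> z\<^sub>0) g'(z\<^sub>0)\<close>; differentiating \<open>g \<circ> \<rho> = \<rho> \<circ> g\<close> gives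
  \<open>g'(\<rho> z\<^sub>0) = (g'(z\<^sub>0))\<^sup>* |z\<^sub>0|\<^sup>4\<close>, so the multiplier is \<open>|g'(z\<^sub>0)|\<^sup>2 |z\<^sub>0|\<^sup>4 \<ge> 0\<close>.
  The cycle through \<open>z\<^sub>0 = 0\<close> is superattracting.
\<close>

lemma exact_period_dvd:
  assumes "exact_period f z n" and "(f ^^ m) z = z"
  shows "n dvd m"
proof -
  have "(f ^^ (m mod n)) z = z"
    using assms by (simp add: exact_period_def funpow_mod_eq)
  moreover have "m mod n < n"
    using assms(1) by (simp add: exact_period_def)
  ultimately have "m mod n = 0"
    using assms(1) unfolding exact_period_def by (meson neq0_conv)
  then show ?thesis by (simp add: dvd_eq_mod_eq_0)
qed

lemma exact_period_eq_double:
  assumes "exact_period f z n" and "0 < k" and "k < n" and "(f ^^ (k + k)) z = z"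
  shows "n = k + k"
proof -
  obtain q where q: "k + k = n * q"
    using exact_period_dvd[OF assms(1,4)] ..
  with \<open>k < n\<close> have "n * q < n * 2"
    by linarith
  moreover have "q \<noteq> 0"
    using q \<open>0 < k\<close> by (metis add_gr_0 mult_0_right less_irrefl)
  ultimately show ?thesis
    using q by (simp add: less_2_cases_iff)
qed

lemma funpow_in_cycle_of:
  assumes "exact_period f z n"
  shows "(f ^^ k) z \<in> cycle_of f z n"
proof -
  have "(f ^^ k) z = (f ^^ (k mod n)) z" and "k mod n < n"
    using assms by (simp_all add: exact_period_def funpow_mod_eq)
  then show ?thesis unfolding cycle_of_def by blast
qed

lemma self_in_cycle_of: "exact_period f z n \<Longrightarrow> z \<in> cycle_of f z n"
  using funpow_in_cycle_of[of f z n 0] by simp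

lemma finite_cycle_of: "finite (cycle_of f z n)"
  unfolding cycle_of_def by simp

lemma funpow_fixed_point: "f p = p \<Longrightarrow> (f ^^ m) p = p"
  by (induction m) simp_all

lemma fixed_point_notin_cycle_of:
  assumes "exact_period f z n" and "f p = p" and "z \<noteq> p"
  shows "p \<notin> cycle_of f z n"
proof
  assume "p \<in> cycle_of f z n"
  then obtain k where "k < n" and k: "(f ^^ k) z = p"
    unfolding cycle_of_def by blast
  then have "(f ^^ n) z = (f ^^ (n - k + k)) z"
    by simp
  also have "\<dots> = (f ^^ (n - k)) ((f ^^ k) z)"
    by (simp add: funpow_add)
  also have "\<dots> = p"
    using k assms(2) by (simp add: funpow_fixed_point)
  finally show False
    using assms(1,3) by (simp add: exact_period_def)
qed

lemma orbit_avoids_fixed_point: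
  fixes f :: "'a::metric_space \<Rightarrow> 'a"
  assumes "closed C" "C \<noteq> {}" "p \<notin> C" "f p = p"
    and lim: "(\<lambda>m. infdist ((f ^^ m) z) C) \<longlonglongrightarrow> 0"
  shows "(f ^^ m) z \<noteq> p"
proof
  assume hit: "(f ^^ m) z = p"
  have "\<forall>\<^sub>F j in sequentially. infdist ((f ^^ j) z) C = infdist p C"
  proof (rule eventually_sequentiallyI)
    fix j assume "m \<le> j"
    then have "(f ^^ j) z = (f ^^ (j - m + m)) z"
      by simp
    also have "\<dots> = (f ^^ (j - m)) ((f ^^ m) z)"
      by (simp add: funpow_add)
    finally show "infdist ((f ^^ j) z) C = infdist p C"
      using hit assms(4) by (simp add: funpow_fixed_point)
  qed
  then have "(\<lambda>j. infdist ((f ^^ j) z) C) \<longlonglongrightarrow> infdist p C"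
    by (rule tendsto_eventually)
  with lim have "infdist p C = 0"
    using LIMSEQ_unique by blast
  with assms(1-3) show False
    using in_closed_iff_infdist_zero by blast
qed

lemma tendsto_infdist_image:
  fixes g :: "'a::heine_borel \<Rightarrow> 'b::metric_space"
  assumes "finite C" and cont: "\<And>p. p \<in> C \<Longrightarrow> isCont g p"
    and lim: "(\<lambda>m. infdist (x m) C) \<longlonglongrightarrow> 0"
  shows "(\<lambda>m. infdist (g (x m)) (g ` C)) \<longlonglongrightarrow> 0"
proof (cases "C = {}")
  case False
  show ?thesis
  proof (rule tendstoI)
    fix \<epsilon> :: real assume "\<epsilon> > 0"
    then have "\<forall>p\<in>C. \<exists>\<delta>>0. \<forall>y. dist y p < \<delta> \<longrightarrow> dist (g y) (g p) < \<epsilon>"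
      using cont continuous_at_eps_delta by blast
    then obtain \<delta> where \<delta>: "\<And>p. p \<in> C \<Longrightarrow> \<delta> p > 0"
      "\<And>p y. p \<in> C \<Longrightarrow> dist y p < \<delta> p \<Longrightarrow> dist (g y) (g p) < \<epsilon>"
      by metis
    define d where "d = Min (\<delta> ` C)"
    have "d > 0"
      using \<delta>(1) assms(1) False by (simp add: d_def)
    then have "\<forall>\<^sub>F m in sequentially. infdist (x m) C < d"
      using order_tendstoD(2)[OF lim] by blast
    then show "\<forall>\<^sub>F m in sequentially. dist (infdist (g (x m)) (g ` C)) 0 < \<epsilon>"
    proof eventually_elim
      case (elim m)
      obtain p where p: "p \<in> C" "infdist (x m) C = dist (x m) p"
        using infdist_attains_inf[OF finite_imp_closed[OF assms(1)] False] by blast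
      have "d \<le> \<delta> p"
        using p(1) assms(1) by (simp add: d_def)
      with elim p have "dist (g (x m)) (g p) < \<epsilon>"
        by (intro \<delta>(2)) auto
      moreover have "infdist (g (x m)) (g ` C) \<le> dist (g (x m)) (g p)"
        using p(1) by (intro infdist_le) simp
      ultimately show ?case
        by (simp add: infdist_nonneg)
    qed
  qed
qed (simp add: infdist_def)

lemma Int_nonempty_if_infdist_tendsto_0:
  fixes A B :: "'a::heine_borel set"
  assumes "finite A" "A \<noteq> {}" "finite B" "B \<noteq> {}"
    and "(\<lambda>m. infdist (y m) A) \<longlonglongrightarrow> 0" "(\<lambda>m. infdist (y m) B) \<longlonglongrightarrow> 0"
  shows "A \<inter> B \<noteq> {}"
proof
  assume "A \<inter> B = {}"
  then have pos: "setdist A B > 0"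
    using assms(1-4) by (simp add: setdist_gt_0_compact_closed finite_imp_compact finite_imp_closed)
  have below: "setdist A B \<le> infdist (y m) A + infdist (y m) B" for m
  proof -
    obtain p where p: "p \<in> A" "infdist (y m) A = dist (y m) p"
      using infdist_attains_inf[OF finite_imp_closed[OF assms(1)] assms(2)] by blast
    have "setdist A B \<le> infdist p B"
      using p(1) by (simp add: infdist_eq_setdist setdist_le_sing)
    also have "\<dots> \<le> infdist (y m) B + dist p (y m)"
      by (rule infdist_triangle)
    finally show ?thesis
      using p(2) by (simp add: dist_commute)
  qed
  have "(\<lambda>m. infdist (y m) A + infdist (y m) B) \<longlonglongrightarrow> 0"
    using tendsto_add[OF assms(5,6)] by simp
  from order_tendstoD(2)[OF this pos]
  obtain m where "infdist (y m) A + infdist (y m) B < setdist A B"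
    by (auto simp: eventually_sequentially)
  with below[of m] show False by simp
qed

text \<open>Since \<open>inverse 0 = 0\<close>, the reflection fixes \<open>0\<close>; together with \<open>B\<^sub>a(0) = 0\<close> and the
  junk value \<open>B\<^sub>a(1/a\<^sup>*) = 0\<close> at the pole, this makes the two maps commute on all of \<open>\<complex>\<close>.\<close>
definition circle_reflect :: "complex \<Rightarrow> complex" where
  "circle_reflect z = inverse (cnj z)"

lemma circle_reflect_circle_reflect [simp]: "circle_reflect (circle_reflect z) = z"
  by (simp add: circle_reflect_def)

lemma circle_reflect_eq_0_iff [simp]: "circle_reflect z = 0 \<longleftrightarrow> z = 0"
  by (simp add: circle_reflect_def)

lemma blaschke_circle_reflect: "blaschke a (circle_reflect z) = circle_reflect (blaschke a z)"
proof (cases "z = 0")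
  case False
  then have "blaschke a (circle_reflect z) = (1 - a * cnj z) / (cnj z ^ 3 * (cnj z - cnj a))"
    unfolding blaschke_def circle_reflect_def
    by (cases "cnj z = cnj a") (simp_all add: field_simps)
  also have "\<dots> = circle_reflect (blaschke a z)"
    by (simp add: blaschke_def circle_reflect_def inverse_divide)
  finally show ?thesis .
qed (simp add: blaschke_def circle_reflect_def)

lemma funpow_blaschke_circle_reflect:
  "(blaschke a ^^ m) (circle_reflect z) = circle_reflect ((blaschke a ^^ m) z)"
  by (induction m) (simp_all add: blaschke_circle_reflect)

lemma crit_minus_eq_circle_reflect:
  assumes "cmod a > 2"
  shows "crit_minus a = circle_reflect (crit_plus a)"
proof -
  define r where "r = cmod a"
  define s where "s = sqrt ((r^2 - 4) * (r^2 - 1))"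
  define t where "t = (2 + r^2 + s) / (3 * r^2)"
  have "r > 2" using assms by (simp add: r_def)
  then have "r^2 > 4"
    using power_strict_mono[of 2 r 2] by simp
  have "s^2 = (r^2 - 4) * (r^2 - 1)" and "s \<ge> 0"
    using \<open>r^2 > 4\<close> by (simp_all add: s_def)
  then have "(2 + r^2 - s) * (2 + r^2 + s) = 9 * r^2"
    by (simp add: algebra_simps power2_eq_square)
  moreover have "2 + r^2 + s > 0"
    using \<open>s \<ge> 0\<close> by (simp add: add_pos_nonneg)
  ultimately have "(2 + r^2 - s) / (3 * r^2) = 3 / (2 + r^2 + s)"
    using \<open>r > 2\<close> by (simp add: field_simps)
  also have "\<dots> = 1 / (r^2 * t)"
    using \<open>r > 2\<close> by (simp add: t_def)
  finally have t_minus: "(2 + r^2 - s) / (3 * r^2) = 1 / (r^2 * t)" .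
  have "t > 0"
    using \<open>2 + r^2 + s > 0\<close> \<open>r > 2\<close> by (simp add: t_def)
  have "a \<noteq> 0" and a: "cnj a * a = (of_real r)^2"
    using \<open>r > 2\<close> complex_norm_square[of a] by (auto simp: r_def mult.commute)
  have "crit_minus a = a * of_real ((2 + r^2 - s) / (3 * r^2))"
    by (simp add: crit_minus_def r_def s_def)
  also have "\<dots> = inverse (cnj a * of_real t)"
    using \<open>t > 0\<close> \<open>a \<noteq> 0\<close> by (simp add: t_minus a[symmetric] field_simps)
  also have "\<dots> = circle_reflect (crit_plus a)"
    by (simp add: crit_plus_def circle_reflect_def r_def s_def t_def)
  finally show ?thesis .
qed

lemma blaschke_0 [simp]: "blaschke a 0 = 0"
  by (simp add: blaschke_def)

lemma blaschke_pole: "1 - cnj a * z = 0 \<Longrightarrow> blaschke a z = 0"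
  by (simp add: blaschke_def)

lemma zero_notin_cycle_of_blaschke:
  "exact_period (blaschke a) z0 n \<Longrightarrow> z0 \<noteq> 0 \<Longrightarrow> 0 \<notin> cycle_of (blaschke a) z0 n"
  by (rule fixed_point_notin_cycle_of) simp_all

lemma cycle_of_blaschke_pole_free:
  assumes "exact_period (blaschke a) z0 n" and "z0 \<noteq> 0"
  shows "1 - cnj a * (blaschke a ^^ j) z0 \<noteq> 0"
proof
  assume "1 - cnj a * (blaschke a ^^ j) z0 = 0"
  then have "(blaschke a ^^ Suc j) z0 = 0"
    by (simp add: blaschke_pole)
  with funpow_in_cycle_of[OF assms(1)] zero_notin_cycle_of_blaschke[OF assms] show False
    by metis
qed

lemma basin_orbit_nonzero:
  assumes "exact_period (blaschke a) z0 n" and "z0 \<noteq> 0" and "z \<in> basin a z0 n"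
  shows "(blaschke a ^^ m) z \<noteq> 0"
proof (rule orbit_avoids_fixed_point)
  show "(\<lambda>m. infdist ((blaschke a ^^ m) z) (cycle_of (blaschke a) z0 n)) \<longlonglongrightarrow> 0"
    using assms(3) by (simp add: basin_def)
qed (use assms finite_imp_closed[OF finite_cycle_of] self_in_cycle_of[OF assms(1)]
       zero_notin_cycle_of_blaschke in auto)

lemma isCont_circle_reflect: "z \<noteq> 0 \<Longrightarrow> isCont circle_reflect z"
  unfolding circle_reflect_def by (intro continuous_intros) simp

lemma tendsto_infdist_circle_reflect_cycle_of:
  assumes "exact_period (blaschke a) z0 n" and "z0 \<noteq> 0" and "z \<in> basin a z0 n"
  shows "(\<lambda>m. infdist ((blaschke a ^^ m) (circle_reflect z))
            (circle_reflect ` cycle_of (blaschke a) z0 n)) \<longlonglongrightarrow> 0"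
  unfolding funpow_blaschke_circle_reflect
proof (rule tendsto_infdist_image[OF finite_cycle_of])
  show "(\<lambda>m. infdist ((blaschke a ^^ m) z) (cycle_of (blaschke a) z0 n)) \<longlonglongrightarrow> 0"
    using assms(3) by (simp add: basin_def)
qed (metis isCont_circle_reflect zero_notin_cycle_of_blaschke[OF assms(1,2)])

lemma circle_reflect_in_basin:
  assumes "exact_period (blaschke a) z0 n" and "z0 \<noteq> 0" and "z \<in> basin a z0 n"
    and symm: "circle_reflect ` cycle_of (blaschke a) z0 n = cycle_of (blaschke a) z0 n"
  shows "circle_reflect z \<in> basin a z0 n"
proof -
  have "1 - cnj a * (blaschke a ^^ m) (circle_reflect z) \<noteq> 0" for m
  proof
    define y where "y = (blaschke a ^^ m) z"
    assume "1 - cnj a * (blaschke a ^^ m) (circle_reflect z) = 0"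
    then have "cnj a * inverse (cnj y) = 1"
      unfolding y_def funpow_blaschke_circle_reflect by (simp add: circle_reflect_def)
    then have "cnj a = cnj y"
      by (cases "y = 0") (simp_all add: field_simps)
    then have "y = a"
      by simp
    then have "(blaschke a ^^ Suc m) z = 0"
      by (simp add: y_def blaschke_def)
    with basin_orbit_nonzero[OF assms(1-3)] show False
      by blast
  qed
  with tendsto_infdist_circle_reflect_cycle_of[OF assms(1-3)] show ?thesis
    by (simp add: basin_def symm)
qed

lemma circle_reflect_in_cycle_of:
  assumes ep: "exact_period (blaschke a) z0 n" and "z0 \<noteq> 0"
    and "z \<in> basin a z0 n" and "circle_reflect z \<in> basin a z0 n"
  obtains k where "k < n" and "circle_reflect z0 = (blaschke a ^^ k) z0"
proof -
  let ?C = "cycle_of (blaschke a) z0 n"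
  have "?C \<inter> circle_reflect ` ?C \<noteq> {}"
  proof (rule Int_nonempty_if_infdist_tendsto_0)
    show "(\<lambda>m. infdist ((blaschke a ^^ m) (circle_reflect z)) ?C) \<longlonglongrightarrow> 0"
      using assms(4) by (simp add: basin_def)
  qed (use tendsto_infdist_circle_reflect_cycle_of[OF assms(1-3)] self_in_cycle_of[OF ep]
         finite_cycle_of in auto)
  then obtain i j where "i < n" and ij: "circle_reflect ((blaschke a ^^ i) z0) = (blaschke a ^^ j) z0"
    unfolding cycle_of_def by auto
  have "circle_reflect z0 = circle_reflect ((blaschke a ^^ (n - i + i)) z0)"
    using ep \<open>i < n\<close> by (simp add: exact_period_def)
  also have "\<dots> = (blaschke a ^^ (n - i)) (circle_reflect ((blaschke a ^^ i) z0))"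
    by (simp add: funpow_add funpow_blaschke_circle_reflect)
  also have "\<dots> = (blaschke a ^^ (n - i + j)) z0"
    by (simp add: ij funpow_add)
  also have "\<dots> = (blaschke a ^^ ((n - i + j) mod n)) z0"
    using ep by (simp add: exact_period_def funpow_mod_eq)
  finally show ?thesis
    using that[of "(n - i + j) mod n"] ep by (simp add: exact_period_def)
qed

lemma blaschke_field_differentiable:
  "1 - cnj a * z \<noteq> 0 \<Longrightarrow> blaschke a field_differentiable at z"
  unfolding blaschke_def[abs_def] by (auto intro!: derivative_intros)

lemma funpow_blaschke_field_differentiable:
  assumes "\<And>j. 1 - cnj a * (blaschke a ^^ j) z \<noteq> 0"
  shows "(blaschke a ^^ m) field_differentiable at z"
proof (induction m)
  case (Suc m)
  then have "(blaschke a \<circ> (blaschke a ^^ m)) field_differentiable at z"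
    using field_differentiable_compose blaschke_field_differentiable assms by blast
  then show ?case by (simp add: o_def)
qed (simp add: field_differentiable_ident id_def)

lemma deriv_blaschke_0: "deriv (blaschke a) 0 = 0"
proof -
  have "((\<lambda>z. z ^ 3 * (z - a) / (1 - cnj a * z)) has_field_derivative 0) (at 0)"
    by (rule derivative_eq_intros refl | simp)+
  then show ?thesis
    unfolding blaschke_def[abs_def] by (rule DERIV_imp_deriv)
qed

lemma multiplier_blaschke_0:
  assumes "n > 0"
  shows "multiplier (blaschke a) 0 n = 0"
proof -
  obtain m where n: "n = Suc m"
    using assms by (cases n) auto
  have "(blaschke a ^^ m) field_differentiable at (blaschke a 0)"
    by (intro funpow_blaschke_field_differentiable) (simp add: funpow_fixed_point)
  then have "deriv ((blaschke a ^^ m) \<circ> blaschke a) 0 = 0"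
    by (simp add: deriv_chain blaschke_field_differentiable deriv_blaschke_0)
  then show ?thesis
    unfolding multiplier_def n funpow_Suc_right .
qed

text \<open>Differentiating \<open>circle_reflect \<circ> g = g \<circ> circle_reflect\<close>, written as
  \<open>inverse \<circ> g = cnj \<circ> g \<circ> cnj \<circ> inverse\<close>.\<close>
lemma deriv_at_circle_reflect:
  fixes g :: "complex \<Rightarrow> complex"
  assumes comm: "\<And>z. g (circle_reflect z) = circle_reflect (g z)"
    and "g field_differentiable at z" and "g field_differentiable at (circle_reflect z)"
    and "z \<noteq> 0" and "g z \<noteq> 0"
  shows "cnj (deriv g (circle_reflect z)) = deriv g z * z\<^sup>2 / (g z)\<^sup>2"
proof -
  have "((cnj \<circ> g \<circ> cnj) has_field_derivative cnj (deriv g (circle_reflect z))) (at (inverse z))"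
    using assms(3) by (intro has_field_derivative_cnj_cnj)
      (simp add: circle_reflect_def DERIV_deriv_iff_field_differentiable)
  from DERIV_chain[OF this DERIV_inverse[OF \<open>z \<noteq> 0\<close>]]
  have "((\<lambda>w. inverse (g w)) has_field_derivative
          cnj (deriv g (circle_reflect z)) * - (inverse z ^ Suc (Suc 0))) (at z)"
    using comm by (simp add: o_def circle_reflect_def)
  moreover have "((\<lambda>w. inverse (g w)) has_field_derivative
          - (deriv g z * inverse (g z ^ Suc (Suc 0)))) (at z)"
    using assms(2,5) by (intro DERIV_inverse_fun) (simp_all add: DERIV_deriv_iff_field_differentiable)
  ultimately have "cnj (deriv g (circle_reflect z)) * - (inverse z ^ Suc (Suc 0)) =
      - (deriv g z * inverse (g z ^ Suc (Suc 0)))"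
    by (rule DERIV_unique)
  with assms(4,5) show ?thesis
    by (simp add: field_simps numeral_2_eq_2)
qed

lemma deriv_mult_deriv_if_circle_reflect:
  fixes g :: "complex \<Rightarrow> complex"
  assumes comm: "\<And>z. g (circle_reflect z) = circle_reflect (g z)"
    and dz: "g field_differentiable at z" and dgz: "g field_differentiable at (g z)"
    and "z \<noteq> 0" and gz: "g z = circle_reflect z"
  shows "deriv g (g z) * deriv g z = of_real ((cmod (deriv g z))\<^sup>2 * ((cmod z)\<^sup>2)\<^sup>2)"
proof -
  have "z\<^sup>2 / (g z)\<^sup>2 = (z * cnj z)\<^sup>2"
    unfolding gz circle_reflect_def by (simp add: divide_inverse power_inverse power_mult_distrib)
  also have "\<dots> = of_real (((cmod z)\<^sup>2)\<^sup>2)"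
    by (metis complex_norm_square of_real_power)
  finally have modulus: "z\<^sup>2 / (g z)\<^sup>2 = of_real (((cmod z)\<^sup>2)\<^sup>2)" .
  have "cnj (deriv g (g z)) = deriv g z * z\<^sup>2 / (g z)\<^sup>2"
    using deriv_at_circle_reflect[OF comm dz] dgz gz \<open>z \<noteq> 0\<close> by simp
  then have "deriv g (g z) = cnj (deriv g z) * of_real (((cmod z)\<^sup>2)\<^sup>2)"
    unfolding times_divide_eq_right[symmetric] modulus
    by (metis complex_cnj_cnj complex_cnj_mult complex_cnj_complex_of_real)
  then show ?thesis
    using complex_norm_square[of "deriv g z"] by (simp add: mult_ac)
qed

lemma multiplier_nonneg_if_circle_reflect_swaps:
  assumes ep: "exact_period (blaschke a) z0 n" and "z0 \<noteq> 0"
    and "0 < k" and "k < n" and swap: "circle_reflect z0 = (blaschke a ^^ k) z0"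
  shows "multiplier (blaschke a) z0 n \<in> \<real> \<and> Re (multiplier (blaschke a) z0 n) \<ge> 0"
proof -
  define g where "g = blaschke a ^^ k"
  have gz: "g z0 = circle_reflect z0"
    using swap by (simp add: g_def)
  then have "(blaschke a ^^ (k + k)) z0 = z0"
    by (simp add: g_def funpow_add funpow_blaschke_circle_reflect)
  with exact_period_eq_double[OF ep \<open>0 < k\<close> \<open>k < n\<close>] have n: "n = k + k" .
  have "1 - cnj a * (blaschke a ^^ j) (g z0) \<noteq> 0" for j
    using cycle_of_blaschke_pole_free[OF ep \<open>z0 \<noteq> 0\<close>, of "j + k"]
    by (simp add: g_def funpow_add)
  then have dz: "g field_differentiable at z0" and dgz: "g field_differentiable at (g z0)"
    unfolding g_def using cycle_of_blaschke_pole_free[OF ep \<open>z0 \<noteq> 0\<close>]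
    by (simp_all add: funpow_blaschke_field_differentiable)
  have "multiplier (blaschke a) z0 n = deriv g (g z0) * deriv g z0"
    unfolding multiplier_def n funpow_add g_def[symmetric] using dz dgz by (rule deriv_chain)
  also have "\<dots> = of_real ((cmod (deriv g z0))\<^sup>2 * ((cmod z0)\<^sup>2)\<^sup>2)"
    using dz dgz \<open>z0 \<noteq> 0\<close> gz
    by (intro deriv_mult_deriv_if_circle_reflect) (simp_all add: g_def funpow_blaschke_circle_reflect)
  finally show ?thesis
    by simp
qed

lemma immediate_basin_subset_basin: "immediate_basin a z0 n \<subseteq> basin a z0 n"
  unfolding immediate_basin_def using connected_component_subset by blast

lemma circle_reflect_in_connected_component_basin:
  assumes ep: "exact_period (blaschke a) z0 n" and "z0 \<noteq> 0"
    and fixed: "circle_reflect z0 = z0" and w: "w \<in> cycle_of (blaschke a) z0 n"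
    and z: "z \<in> connected_component_set (basin a z0 n) w"
  shows "circle_reflect z \<in> connected_component_set (basin a z0 n) w"
proof -
  define K where "K = connected_component_set (basin a z0 n) w"
  have fixed_cycle: "circle_reflect x = x" if "x \<in> cycle_of (blaschke a) z0 n" for x
    using that fixed unfolding cycle_of_def by (auto simp flip: funpow_blaschke_circle_reflect)
  have "w \<in> K"
    using z connected_component_eq_empty[of "basin a z0 n" w] connected_component_refl[of w]
    unfolding K_def by blast
  then have "w \<in> circle_reflect ` K"
    using fixed_cycle[OF w] by (metis image_eqI)
  moreover have "connected (circle_reflect ` K)"
  proof (rule connected_continuous_image)
    have "0 \<notin> K"
      using basin_orbit_nonzero[OF ep \<open>z0 \<noteq> 0\<close>, of _ 0] connected_component_subset
      unfolding K_def by fastforce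
    then show "continuous_on K circle_reflect"
      unfolding circle_reflect_def by (intro continuous_intros) auto
  qed (simp add: K_def)
  moreover have "circle_reflect ` cycle_of (blaschke a) z0 n = cycle_of (blaschke a) z0 n"
    using fixed_cycle by simp
  then have "circle_reflect ` K \<subseteq> basin a z0 n"
    using circle_reflect_in_basin[OF ep \<open>z0 \<noteq> 0\<close>] connected_component_subset
    unfolding K_def by blast
  ultimately have "circle_reflect ` K \<subseteq> K"
    unfolding K_def by (rule connected_component_maximal)
  with z show ?thesis
    unfolding K_def by blast
qed

theorem mainTheorem16:
  fixes a z0 :: complex and n :: nat
  assumes "cmod a > 2"
    and "exact_period (blaschke a) z0 n"
    and "cmod (multiplier (blaschke a) z0 n) < 1"
    and "crit_plus a \<in> immediate_basin a z0 n"
    and "crit_minus a \<in> immediate_basin a z0 n"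
    and "connected_component_set (basin a z0 n) (crit_plus a)
           \<noteq> connected_component_set (basin a z0 n) (crit_minus a)"
  shows "multiplier (blaschke a) z0 n \<in> \<real> \<and> Re (multiplier (blaschke a) z0 n) \<ge> 0"
proof (cases "z0 = 0")
  case True
  with assms(2) show ?thesis
    by (simp add: exact_period_def multiplier_blaschke_0)
next
  case False
  have minus: "crit_minus a = circle_reflect (crit_plus a)"
    using assms(1) by (rule crit_minus_eq_circle_reflect)
  obtain k where "k < n" and swap: "circle_reflect z0 = (blaschke a ^^ k) z0"
    using circle_reflect_in_cycle_of[OF assms(2) False] assms(4,5) immediate_basin_subset_basin
    unfolding minus by blast
  show ?thesis
  proof (cases "k = 0")
    case True
    obtain w where "w \<in> cycle_of (blaschke a) z0 n"
      and plus: "crit_plus a \<in> connected_component_set (basin a z0 n) w"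
      using assms(4) unfolding immediate_basin_def by blast
    with circle_reflect_in_connected_component_basin[OF assms(2) False] swap True
    have "crit_minus a \<in> connected_component_set (basin a z0 n) w"
      unfolding minus by simp
    with plus assms(6) show ?thesis
      by (metis connected_component_eq)
  next
    case False
    with \<open>z0 \<noteq> 0\<close> \<open>k < n\<close> swap show ?thesis
      by (intro multiplier_nonneg_if_circle_reflect_swaps[OF assms(2)]) simp_all
  qed
qed

end
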